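(* Let $\xi(t)$, $t\geq0$, be a stochastically continuous real-valued stochastic process. Then $\xi$ is time-stable if and only if $$a\circ\xi_1+b\circ\xi_2\overset{d}{=}(a+b)\circ\xi$$ for all $a,b>0$, where $\xi_1,\xi_2$ are independent copies of $\xi$.
   Context: For a process $\eta$ on $[0,\infty)$ and $a>0$, $(a\circ\eta)(t)=\eta(at)$, $t\geq0$ (time scaling). $\overset{d}{=}$ denotes equality of all finite-dimensional distributions. A stochastically continuous real-valued process $\xi(t)$, $t\geq0$, is called time-stable if for each integer $n\geq2$, $\xi_1+\cdots+\xi_n\overset{d}{=}n\circ\xi$, where $\xi_1,\dots,\xi_n$ are i.i.d. copies of $\xi$. *)

theory Defs
  imports "HOL-Probability.Probability"
begin

text \<open>A real-valued process on [0,oo) is modelled as X :: real => 'a => real on a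
probability space M; only times t >= 0 matter.\<close>

definition fdd_eq :: "'a measure \<Rightarrow> (real \<Rightarrow> 'a \<Rightarrow> real) \<Rightarrow> 'b measure \<Rightarrow> (real \<Rightarrow> 'b \<Rightarrow> real) \<Rightarrow> bool" where
  "fdd_eq M X N Y \<longleftrightarrow>
     (\<forall>I. finite I \<and> I \<subseteq> {0..} \<longrightarrow>
        distr M (PiM I (\<lambda>_. borel)) (\<lambda>\<omega>. \<lambda>t\<in>I. X t \<omega>) =
        distr N (PiM I (\<lambda>_. borel)) (\<lambda>\<omega>. \<lambda>t\<in>I. Y t \<omega>))"

definition stoch_continuous :: "'a measure \<Rightarrow> (real \<Rightarrow> 'a \<Rightarrow> real) \<Rightarrow> bool" where
  "stoch_continuous M X \<longleftrightarrow>
     (\<forall>t\<ge>0. \<forall>\<epsilon>>0. ((\<lambda>s. measure M {\<omega>\<in>space M. \<bar>X s \<omega> - X t \<omega>\<bar> > \<epsilon>}) \<longlongrightarrow> 0) (at t within {0..}))"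

text \<open>Time-stability. The i.i.d. copies xi_1..xi_n are realised canonically on the
product space M^n: xi_i(omega) = X(omega_i).\<close>
definition time_stable :: "'a measure \<Rightarrow> (real \<Rightarrow> 'a \<Rightarrow> real) \<Rightarrow> bool" where
  "time_stable M X \<longleftrightarrow>
     (\<forall>n::nat. n \<ge> 2 \<longrightarrow>
        fdd_eq (PiM {..<n} (\<lambda>_. M)) (\<lambda>t \<omega>. \<Sum>i<n. X t (\<omega> i))
               M (\<lambda>t \<omega>. X (real n * t) \<omega>))"

end

theory Submission
  imports Defs
begin

text \<open>Let \<open>\<phi>\<^sub>c\<close> be the characteristic function of the finite-dimensional distributions of the
  time-scaled process \<open>c \<circ> \<xi>\<close> (at fixed times and frequencies). Finite-dimensional
  distributions are determined by characteristic functions, and independence turns sums into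
  products; so time-stability says \<open>\<phi>\<^sub>n\<^sub>c = \<phi>\<^sub>c\<^sup>n\<close> for integers \<open>n \<ge> 2\<close>, and the two-copy condition
  says \<open>\<phi>\<^sub>a\<^sub>+\<^sub>b = \<phi>\<^sub>a \<phi>\<^sub>b\<close>. The latter gives the former by induction. Conversely, stochastic
  continuity makes \<open>c \<mapsto> \<phi>\<^sub>c\<close> continuous on \<open>[0,\<infinity>)\<close>; the power law makes the characteristic
  function of \<open>\<xi>(0)\<close> idempotent, hence \<open>\<phi>\<^sub>0 = 1\<close>, and by halving \<open>\<phi>\<^sub>c\<close> never vanishes. So
  \<open>\<phi>\<^sub>c = exp (L c)\<close> for a continuous \<open>L\<close> with \<open>L 0 = 0\<close>, which the power law makes homogeneous under
  natural numbers, hence linear, and \<open>\<phi>\<^sub>a\<^sub>+\<^sub>b = \<phi>\<^sub>a \<phi>\<^sub>b\<close> follows.\<close>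

section \<open>Characteristic functions determine finite measures on \<open>\<real>\<^sup>I\<close>\<close>

text \<open>Levy's uniqueness theorem is lifted from the real line to \<open>\<real>\<^sup>I\<close> by trading the Fourier
  variables one coordinate at a time for box indicators: for a nonnegative weight \<open>p\<close> on \<open>\<real>\<^sup>I\<close>, the one-dimensional characteristic function of the \<open>p\<close>-weighted image
  of a coordinate is a combination of the joint transforms, and weights of the form
  \<open>w (1 + r cos (v - \<theta>))\<close> suffice to recover \<open>w e\<^sup>i\<^sup>v\<close>.\<close>

lemma real_distribution_density_normalize:
  fixes R :: "real measure"
  assumes "finite_measure R" and sets_R: "sets R = sets borel" and pos: "measure R UNIV > 0"
  shows "real_distribution (density R (\<lambda>_. ennreal (1 / measure R UNIV)))"
proof -
  interpret finite_measure R by fact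
  have space_R: "space R = UNIV"
    using sets_eq_imp_space_eq[OF sets_R] by simp
  have "emeasure (density R (\<lambda>_. ennreal (1 / measure R UNIV))) (space R)
      = ennreal (1 / measure R UNIV) * ennreal (measure R UNIV)"
    using sets.top[of R] by (simp add: emeasure_density_const emeasure_eq_measure space_R)
  also have "\<dots> = 1"
    using pos by (simp add: ennreal_mult''[symmetric] del: ennreal_mult'')
  finally show ?thesis
    unfolding real_distribution_def real_distribution_axioms_def
    by (intro conjI prob_spaceI) (simp_all add: sets_R space_R)
qed

lemma char_density_const:
  fixes R :: "real measure"
  assumes sets_R: "sets R = sets borel" and "r \<ge> 0"
  shows "char (density R (\<lambda>_. ennreal r)) s = r *\<^sub>R (CLINT x|R. iexp (s * x))"
proof -
  have "(\<lambda>x. iexp (s * x)) \<in> borel_measurable borel"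
    by (intro borel_measurable_continuous_onI continuous_intros)
  then have "(\<lambda>x. iexp (s * x)) \<in> borel_measurable R"
    by (simp add: measurable_cong_sets[OF sets_R refl])
  then show ?thesis
    unfolding char_def using \<open>r \<ge> 0\<close> by (subst integral_density) auto
qed

lemma finite_measure_eqI_char:
  fixes R1 R2 :: "real measure"
  assumes "finite_measure R1" "finite_measure R2"
    and sets_R1: "sets R1 = sets borel" and sets_R2: "sets R2 = sets borel"
    and char_eq: "\<And>s. (CLINT x|R1. iexp (s * x)) = (CLINT x|R2. iexp (s * x))"
  shows "R1 = R2"
proof -
  interpret R1: finite_measure R1 by fact
  interpret R2: finite_measure R2 by fact
  have space_R1: "space R1 = UNIV" and space_R2: "space R2 = UNIV"
    using sets_eq_imp_space_eq[OF sets_R1] sets_eq_imp_space_eq[OF sets_R2] by simp_all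
  define c where "c = measure R1 UNIV"
  have c_R2: "measure R2 UNIV = c"
    using char_eq[of 0] space_R1 space_R2 by (simp add: c_def scaleR_conv_of_real)
  have emeasure_R1: "emeasure R1 A \<le> ennreal c" and emeasure_R2: "emeasure R2 A \<le> ennreal c" for A
    using emeasure_space[of R1 A] emeasure_space[of R2 A] c_R2
    by (auto simp: c_def space_R1 space_R2 R1.emeasure_eq_measure R2.emeasure_eq_measure)
  show ?thesis
  proof (cases "c > 0")
    case False
    then have "ennreal c = 0"
      by (simp add: c_def ennreal_eq_0_iff)
    then show ?thesis
      using emeasure_R1 emeasure_R2 by (intro measure_eqI) (simp_all add: sets_R1 sets_R2)
  next
    case True
    define P1 where "P1 = density R1 (\<lambda>_. ennreal (1 / c))"
    define P2 where "P2 = density R2 (\<lambda>_. ennreal (1 / c))"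
    have "P1 = P2"
    proof (rule Levy_uniqueness)
      show "real_distribution P1" "real_distribution P2"
        unfolding P1_def P2_def c_def
        using real_distribution_density_normalize[OF R1.finite_measure_axioms sets_R1]
          real_distribution_density_normalize[OF R2.finite_measure_axioms sets_R2] True c_R2
        by (simp_all add: c_def)
      show "char P1 = char P2"
        using True char_eq by (auto simp: P1_def P2_def char_density_const sets_R1 sets_R2)
    qed
    have rescale: "emeasure R A = ennreal c * emeasure (density R (\<lambda>_. ennreal (1 / c))) A"
      if "A \<in> sets R" for R :: "real measure" and A
      using that True
      by (simp add: emeasure_density_const mult.assoc[symmetric] ennreal_mult''[symmetric] del: ennreal_mult'')
    show ?thesis
    proof (rule measure_eqI)
      fix A assume "A \<in> sets R1"
      then show "emeasure R1 A = emeasure R2 A"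
        using rescale[of A R1] rescale[of A R2] \<open>P1 = P2\<close> by (simp add: P1_def P2_def sets_R1 sets_R2)
    qed (simp add: sets_R1 sets_R2)
  qed
qed

lemma finite_measure_distr_density_bounded:
  fixes N :: "'a measure" and f p :: "'a \<Rightarrow> real"
  assumes "finite_measure N" and f: "f \<in> borel_measurable N" and p: "p \<in> borel_measurable N"
    and p_nonneg: "\<And>x. 0 \<le> p x" and p_bounded: "\<And>x. p x \<le> C"
  shows "finite_measure (distr (density N p) borel f)"
proof -
  interpret finite_measure N by fact
  have "integrable N p"
    using p p_nonneg p_bounded by (intro integrable_const_bound[of _ C]) auto
  then have "emeasure (density N p) (space (density N p)) = ennreal (integral\<^sup>L N p)"
    using p p_nonneg by (simp add: emeasure_density nn_integral_eq_integral[symmetric] cong: nn_integral_cong)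
  then have "finite_measure (density N p)"
    by (intro finite_measureI) simp
  then show ?thesis
    by (rule finite_measure.finite_measure_distr) (simp add: f)
qed

lemma integral_distr_density:
  fixes g :: "real \<Rightarrow> 'b::{banach, second_countable_topology}"
  assumes f: "f \<in> borel_measurable N" and p: "p \<in> borel_measurable N"
    and p_nonneg: "\<And>x. 0 \<le> p x" and g: "g \<in> borel_measurable borel"
  shows "integral\<^sup>L (distr (density N p) borel f) g = (\<integral>x. p x *\<^sub>R g (f x) \<partial>N)"
  using assms by (simp add: integral_distr integral_density)

lemma integral_indicator_eq_if_weighted_char_eq:
  fixes \<mu> \<nu> :: "'a measure" and f p :: "'a \<Rightarrow> real"
  assumes "finite_measure \<mu>" "finite_measure \<nu>" and sets_eq: "sets \<nu> = sets \<mu>"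
    and f: "f \<in> borel_measurable \<mu>" and p: "p \<in> borel_measurable \<mu>"
    and p_nonneg: "\<And>x. 0 \<le> p x" and p_bounded: "\<And>x. p x \<le> C"
    and char_eq: "\<And>s. (\<integral>x. p x *\<^sub>R iexp (s * f x) \<partial>\<mu>) = (\<integral>x. p x *\<^sub>R iexp (s * f x) \<partial>\<nu>)"
    and B: "B \<in> sets borel"
  shows "(\<integral>x. p x * indicator B (f x) \<partial>\<mu>) = (\<integral>x. p x * indicator B (f x) \<partial>\<nu>)"
proof -
  have f_\<nu>: "f \<in> borel_measurable \<nu>" and p_\<nu>: "p \<in> borel_measurable \<nu>"
    using f p by (simp_all add: measurable_cong_sets[OF sets_eq refl])
  have iexp_borel: "(\<lambda>x. iexp (s * x)) \<in> borel_measurable borel" for s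
    by (intro borel_measurable_continuous_onI continuous_intros)
  have "distr (density \<mu> p) borel f = distr (density \<nu> p) borel f"
    using char_eq iexp_borel f p f_\<nu> p_\<nu> p_nonneg p_bounded \<open>finite_measure \<mu>\<close> \<open>finite_measure \<nu>\<close>
    by (intro finite_measure_eqI_char finite_measure_distr_density_bounded) (simp_all add: integral_distr_density)
  then show ?thesis
    using integral_distr_density[OF f p p_nonneg, of "indicator B :: real \<Rightarrow> real"]
      integral_distr_density[OF f_\<nu> p_\<nu> p_nonneg, of "indicator B :: real \<Rightarrow> real"] B
    by simp
qed

lemma one_plus_cos_scaleR_iexp:
  "(1 + r * cos (v - \<theta>)) *\<^sub>R iexp a
     = iexp a + (r / 2 * iexp (- \<theta>)) * iexp (a + v) + (r / 2 * iexp \<theta>) * iexp (a - v)"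
  unfolding cis_conv_exp[symmetric]
  by (simp add: complex_eq_iff cos_add cos_diff sin_add sin_diff field_simps)

lemma iexp_eq_cos_sin: "iexp v = complex_of_real (cos v) + \<i> * complex_of_real (sin v)"
  by (simp add: cis_conv_exp[symmetric] complex_eq_iff)

lemma one_plus_cos_weight_bounds:
  fixes w r x :: real
  assumes "0 \<le> w" "w \<le> 1" "\<bar>r\<bar> \<le> 1"
  shows "0 \<le> w * (1 + r * cos x)" and "w * (1 + r * cos x) \<le> 2"
proof -
  have "\<bar>r * cos x\<bar> \<le> 1"
    using assms(3) abs_cos_le_one[of x] by (simp add: abs_mult mult_le_one)
  then have "0 \<le> 1 + r * cos x" "1 + r * cos x \<le> 2"
    by (auto simp: abs_le_iff)
  then show "0 \<le> w * (1 + r * cos x)" "w * (1 + r * cos x) \<le> 2"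
    using assms mult_mono[of w 1 "1 + r * cos x" 2] by simp_all
qed

lemma integral_lincomb3_eq:
  fixes f g h :: "'a \<Rightarrow> complex"
  assumes "integrable \<mu> f" "integrable \<mu> g" "integrable \<mu> h"
    and "integrable \<nu> f" "integrable \<nu> g" "integrable \<nu> h"
    and "integral\<^sup>L \<mu> f = integral\<^sup>L \<nu> f" "integral\<^sup>L \<mu> g = integral\<^sup>L \<nu> g"
    and "integral\<^sup>L \<mu> h = integral\<^sup>L \<nu> h"
  shows "(\<integral>x. a * f x + b * g x + c * h x \<partial>\<mu>) = (\<integral>x. a * f x + b * g x + c * h x \<partial>\<nu>)"
  using assms by simp

locale finite_measure_pair_PiM =
  fixes I :: "'i set" and \<mu> \<nu> :: "('i \<Rightarrow> real) measure"
  assumes finite_I: "finite I"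
    and finite_\<mu>: "finite_measure \<mu>" and finite_\<nu>: "finite_measure \<nu>"
    and sets_\<mu>: "sets \<mu> = sets (PiM I (\<lambda>_. borel))"
    and sets_\<nu>: "sets \<nu> = sets (PiM I (\<lambda>_. borel))"
begin

lemma measurable_\<mu>: "g \<in> borel_measurable (PiM I (\<lambda>_. borel)) \<Longrightarrow> g \<in> borel_measurable \<mu>"
  and measurable_\<nu>: "g \<in> borel_measurable (PiM I (\<lambda>_. borel)) \<Longrightarrow> g \<in> borel_measurable \<nu>"
  by (simp_all add: measurable_cong_sets[OF sets_\<mu> refl] measurable_cong_sets[OF sets_\<nu> refl])

lemma integrable_bounded:
  fixes g :: "('i \<Rightarrow> real) \<Rightarrow> 'b::{banach, second_countable_topology}"
  assumes "g \<in> borel_measurable (PiM I (\<lambda>_. borel))" and "\<And>y. norm (g y) \<le> B"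
  shows "integrable \<mu> g" and "integrable \<nu> g"
  using assms measurable_\<mu> measurable_\<nu>
  by (auto intro!: finite_measure.integrable_const_bound[OF finite_\<mu>]
      finite_measure.integrable_const_bound[OF finite_\<nu>])

lemma measurable_coordinate:
  "j \<in> I \<Longrightarrow> (\<lambda>y. y j) \<in> borel_measurable (PiM I (\<lambda>_. borel))"
  using measurable_component_singleton[of j I "\<lambda>_. borel"] by simp

lemma integral_weighted_indicator_eq:
  assumes j: "j \<in> I"
    and w_meas: "w \<in> borel_measurable (PiM I (\<lambda>_. borel))"
    and w_nonneg: "\<And>y. 0 \<le> w y" and w_le_1: "\<And>y. w y \<le> 1"
    and v_meas: "v \<in> borel_measurable (PiM I (\<lambda>_. borel))"
    and shifted: "\<And>s c. (\<integral>y. w y *\<^sub>R iexp (s * y j + c * v y) \<partial>\<mu>)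
                      = (\<integral>y. w y *\<^sub>R iexp (s * y j + c * v y) \<partial>\<nu>)"
    and r: "\<bar>r\<bar> \<le> 1" and B: "B \<in> sets borel"
  shows "(\<integral>y. w y * (1 + r * cos (v y - \<theta>)) * indicator B (y j) \<partial>\<mu>)
       = (\<integral>y. w y * (1 + r * cos (v y - \<theta>)) * indicator B (y j) \<partial>\<nu>)"
proof -
  define p where "p y = w y * (1 + r * cos (v y - \<theta>))" for y
  note [measurable] = w_meas v_meas measurable_coordinate[OF j]
  have p_meas: "p \<in> borel_measurable (PiM I (\<lambda>_. borel))"
    unfolding p_def[abs_def] by measurable
  have p_nonneg: "0 \<le> p y" and p_le_2: "p y \<le> 2" for y
    unfolding p_def using one_plus_cos_weight_bounds w_nonneg w_le_1 r by blast+
  have shifted_integrable: "integrable \<mu> (\<lambda>y. w y *\<^sub>R iexp (s * y j + c * v y))"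
      "integrable \<nu> (\<lambda>y. w y *\<^sub>R iexp (s * y j + c * v y))" for s c
    using w_nonneg w_le_1 by (intro integrable_bounded[where B=1]; measurable; simp)+
  have "(\<integral>y. p y *\<^sub>R iexp (s * y j) \<partial>\<mu>) = (\<integral>y. p y *\<^sub>R iexp (s * y j) \<partial>\<nu>)" for s
  proof -
    have "p y *\<^sub>R iexp (s * y j)
        = 1 * (w y *\<^sub>R iexp (s * y j + 0 * v y))
          + (r / 2 * iexp (- \<theta>)) * (w y *\<^sub>R iexp (s * y j + 1 * v y))
          + (r / 2 * iexp \<theta>) * (w y *\<^sub>R iexp (s * y j + (- 1) * v y))" for y
    proof -
      have "p y *\<^sub>R iexp (s * y j) = w y *\<^sub>R ((1 + r * cos (v y - \<theta>)) *\<^sub>R iexp (s * y j))"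
        by (simp add: p_def)
      then show ?thesis
        unfolding one_plus_cos_scaleR_iexp by (simp add: scaleR_conv_of_real algebra_simps)
    qed
    then show ?thesis
      by (simp only:) (rule integral_lincomb3_eq; rule shifted_integrable shifted)
  qed
  then show ?thesis
    using integral_indicator_eq_if_weighted_char_eq[OF finite_\<mu> finite_\<nu> _ measurable_\<mu> measurable_\<mu>,
        OF _ measurable_coordinate[OF j] p_meas p_nonneg p_le_2 _ B]
    by (simp add: p_def sets_\<mu> sets_\<nu>)
qed

lemma integral_box_iexp_eq:
  assumes j: "j \<in> I"
    and w_meas: "w \<in> borel_measurable (PiM I (\<lambda>_. borel))"
    and w_nonneg: "\<And>y. 0 \<le> w y" and w_le_1: "\<And>y. w y \<le> 1"
    and v_meas: "v \<in> borel_measurable (PiM I (\<lambda>_. borel))"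
    and shifted: "\<And>s c. (\<integral>y. w y *\<^sub>R iexp (s * y j + c * v y) \<partial>\<mu>)
                      = (\<integral>y. w y *\<^sub>R iexp (s * y j + c * v y) \<partial>\<nu>)"
    and B: "B \<in> sets borel"
  shows "(\<integral>y. (indicator B (y j) * w y) *\<^sub>R iexp (v y) \<partial>\<mu>)
       = (\<integral>y. (indicator B (y j) * w y) *\<^sub>R iexp (v y) \<partial>\<nu>)"
proof -
  define F where "F r \<theta> y = w y * (1 + r * cos (v y - \<theta>)) * indicator B (y j)" for r \<theta> y
  have F_eq: "(\<integral>y. F r \<theta> y \<partial>\<mu>) = (\<integral>y. F r \<theta> y \<partial>\<nu>)" if "\<bar>r\<bar> \<le> 1" for r \<theta>
    unfolding F_def using j w_meas w_nonneg w_le_1 v_meas shifted that B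
    by (intro integral_weighted_indicator_eq) auto
  have F_integrable: "integrable \<mu> (\<lambda>y. complex_of_real (F r \<theta> y))"
      "integrable \<nu> (\<lambda>y. complex_of_real (F r \<theta> y))" if "\<bar>r\<bar> \<le> 1" for r \<theta>
  proof -
    have "\<bar>F r \<theta> y\<bar> \<le> 2" for y
      using one_plus_cos_weight_bounds[OF w_nonneg w_le_1 that, of y "v y - \<theta>"]
      by (auto simp: F_def indicator_def)
    moreover have "F r \<theta> \<in> borel_measurable (PiM I (\<lambda>_. borel))"
      unfolding F_def[abs_def] using w_meas v_meas measurable_coordinate[OF j] B by measurable
    ultimately show "integrable \<mu> (\<lambda>y. complex_of_real (F r \<theta> y))"
      "integrable \<nu> (\<lambda>y. complex_of_real (F r \<theta> y))"
      by (intro integrable_bounded[where B=2]; simp)+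
  qed
  \<comment> \<open>\<open>e\<^sup>i\<^sup>v = cos v + i sin v\<close> with \<open>sin v = cos (v - \<pi>/2)\<close>\<close>
  have "(indicator B (y j) * w y) *\<^sub>R iexp (v y)
      = 1 * complex_of_real (F 1 0 y) + \<i> * complex_of_real (F 1 (pi / 2) y)
        + (- 1 - \<i>) * complex_of_real (F 0 0 y)" for y
    by (simp add: F_def iexp_eq_cos_sin cos_diff scaleR_conv_of_real algebra_simps)
  then show ?thesis
    by (simp only:) (rule integral_lincomb3_eq; simp add: F_integrable F_eq)
qed

text \<open>Fourier transform in the coordinates outside \<open>J\<close>, distribution of boxes in the coordinates
  in \<open>J\<close>: for \<open>J = {}\<close> this is the characteristic function, for \<open>J = I\<close> the measure of boxes.\<close>

definition mixed_char_eq :: "'i set \<Rightarrow> bool" where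
  "mixed_char_eq J \<longleftrightarrow> (\<forall>A u. (\<forall>i\<in>J. A i \<in> sets borel) \<longrightarrow>
     (\<integral>y. (\<Prod>i\<in>J. indicator (A i) (y i)) *\<^sub>R iexp (\<Sum>l\<in>I - J. u l * y l) \<partial>\<mu>) =
     (\<integral>y. (\<Prod>i\<in>J. indicator (A i) (y i)) *\<^sub>R iexp (\<Sum>l\<in>I - J. u l * y l) \<partial>\<nu>))"

lemma mixed_char_eq_insert:
  assumes J: "J \<subseteq> I" and j: "j \<in> I" "j \<notin> J" and IH: "mixed_char_eq J"
  shows "mixed_char_eq (insert j J)"
  unfolding mixed_char_eq_def
proof (intro allI impI)
  fix A :: "'i \<Rightarrow> real set" and u :: "'i \<Rightarrow> real"
  assume A: "\<forall>i\<in>insert j J. A i \<in> sets borel"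
  define K where "K = I - insert j J"
  define w where "w y = (\<Prod>i\<in>J. indicator (A i) (y i) :: real)" for y
  define v where "v y = (\<Sum>l\<in>K. u l * y l)" for y
  have [measurable]: "(\<lambda>y. y i) \<in> borel_measurable (PiM I (\<lambda>_. borel))" if "i \<in> I" for i
    using measurable_coordinate[OF that] .
  have w_meas: "w \<in> borel_measurable (PiM I (\<lambda>_. borel))"
    unfolding w_def[abs_def] using J A by (intro borel_measurable_prod) auto
  have v_meas: "v \<in> borel_measurable (PiM I (\<lambda>_. borel))"
    unfolding v_def[abs_def] K_def by (intro borel_measurable_sum) auto
  have w_nonneg: "0 \<le> w y" and w_le_1: "w y \<le> 1" for y
    unfolding w_def by (auto intro: prod_nonneg prod_le_1)
  have shifted: "(\<integral>y. w y *\<^sub>R iexp (s * y j + c * v y) \<partial>\<mu>) = (\<integral>y. w y *\<^sub>R iexp (s * y j + c * v y) \<partial>\<nu>)"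
    for s c
  proof -
    have "finite K" "j \<notin> K" "I - J = insert j K"
      using finite_I j by (auto simp: K_def)
    then have sum_eq: "(\<Sum>l\<in>I - J. (if l = j then s else c * u l) * y l) = s * y j + c * v y" for y
      by (auto simp: v_def sum_distrib_left intro!: sum.cong)
    have "(\<integral>y. (\<Prod>i\<in>J. indicator (A i) (y i)) *\<^sub>R iexp (\<Sum>l\<in>I - J. (if l = j then s else c * u l) * y l) \<partial>\<mu>)
        = (\<integral>y. (\<Prod>i\<in>J. indicator (A i) (y i)) *\<^sub>R iexp (\<Sum>l\<in>I - J. (if l = j then s else c * u l) * y l) \<partial>\<nu>)"
      using A IH[unfolded mixed_char_eq_def, rule_format, of A "\<lambda>l. if l = j then s else c * u l"]
      by blast
    then show ?thesis
      unfolding sum_eq w_def .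
  qed
  have "(\<integral>y. (indicator (A j) (y j) * w y) *\<^sub>R iexp (v y) \<partial>\<mu>)
      = (\<integral>y. (indicator (A j) (y j) * w y) *\<^sub>R iexp (v y) \<partial>\<nu>)"
    using A by (intro integral_box_iexp_eq[OF j(1) w_meas w_nonneg w_le_1 v_meas shifted]) simp
  moreover have "(\<Prod>i\<in>insert j J. indicator (A i) (y i)) = indicator (A j) (y j) * w y" for y
    using finite_subset[OF J finite_I] j by (simp add: w_def)
  ultimately show "(\<integral>y. (\<Prod>i\<in>insert j J. indicator (A i) (y i)) *\<^sub>R iexp (\<Sum>l\<in>I - insert j J. u l * y l) \<partial>\<mu>)
      = (\<integral>y. (\<Prod>i\<in>insert j J. indicator (A i) (y i)) *\<^sub>R iexp (\<Sum>l\<in>I - insert j J. u l * y l) \<partial>\<nu>)"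
    unfolding K_def[symmetric] v_def[symmetric] by simp
qed

lemma mixed_char_eq_all:
  assumes "mixed_char_eq {}"
  shows "mixed_char_eq I"
proof -
  have "mixed_char_eq J" if "J \<subseteq> I" for J
    using finite_subset[OF that finite_I] that
  proof (induction J rule: finite_induct)
    case empty
    show ?case by (fact assms)
  next
    case (insert j J)
    then show ?case by (intro mixed_char_eq_insert) auto
  qed
  then show ?thesis by simp
qed

lemma box_indicator_eq_indicator_PiE:
  assumes "y \<in> space (PiM I (\<lambda>_. borel))"
  shows "(\<Prod>i\<in>I. indicator (A i) (y i) :: real) = indicator (Pi\<^sub>E I A) y"
  using assms finite_I by (auto simp: space_PiM PiE_def Pi_def indicator_def)

lemma eq_if_char_eq:
  assumes char_eq: "\<And>u. (CLINT y|\<mu>. iexp (\<Sum>i\<in>I. u i * y i)) = (CLINT y|\<nu>. iexp (\<Sum>i\<in>I. u i * y i))"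
  shows "\<mu> = \<nu>"
proof (rule measure_eqI_PiM_finite[OF finite_I sets_\<mu> sets_\<nu>])
  fix A :: "'i \<Rightarrow> real set" assume A: "\<And>i. i \<in> I \<Longrightarrow> A i \<in> sets borel"
  have "mixed_char_eq I"
    by (rule mixed_char_eq_all) (use char_eq in \<open>simp add: mixed_char_eq_def\<close>)
  then have "(\<integral>y. (\<Prod>i\<in>I. indicator (A i) (y i)) *\<^sub>R iexp 0 \<partial>\<mu>)
      = (\<integral>y. (\<Prod>i\<in>I. indicator (A i) (y i)) *\<^sub>R iexp 0 \<partial>\<nu>)"
    using A unfolding mixed_char_eq_def Diff_cancel sum.empty by blast
  then have "complex_of_real (\<integral>y. (\<Prod>i\<in>I. indicator (A i) (y i)) \<partial>\<mu>)
      = complex_of_real (\<integral>y. (\<Prod>i\<in>I. indicator (A i) (y i)) \<partial>\<nu>)"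
    by (simp only: integral_scaleR_left exp_zero mult_zero_right of_real_0 scaleR_conv_of_real mult_1_right
        integral_complex_of_real)
  moreover have "(\<integral>y. (\<Prod>i\<in>I. indicator (A i) (y i) :: real) \<partial>N) = measure N (Pi\<^sub>E I A)"
    if "sets N = sets (PiM I (\<lambda>_. borel))" for N
  proof -
    have "(\<integral>y. (\<Prod>i\<in>I. indicator (A i) (y i)) \<partial>N) = (\<integral>y. indicator (Pi\<^sub>E I A) y \<partial>N :: real)"
      using sets_eq_imp_space_eq[OF that] box_indicator_eq_indicator_PiE
      by (intro Bochner_Integration.integral_cong) auto
    also have "\<dots> = measure N (Pi\<^sub>E I A)"
      using that A finite_I by (simp add: sets_PiM_I_finite)
    finally show ?thesis .
  qed
  ultimately show "emeasure \<mu> (Pi\<^sub>E I A) = emeasure \<nu> (Pi\<^sub>E I A)"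
    using sets_\<mu> sets_\<nu> finite_measure.emeasure_eq_measure[OF finite_\<mu>]
      finite_measure.emeasure_eq_measure[OF finite_\<nu>]
    by simp
next
  show "range (\<lambda>_::nat. \<Pi>\<^sub>E i\<in>I. space borel) \<subseteq> prod_algebra I (\<lambda>_. borel)"
    using space_in_prod_algebra[of I "\<lambda>_. borel"] by auto
  show "(\<Union>i::nat. \<Pi>\<^sub>E i\<in>I. space borel) = space (PiM I (\<lambda>_. borel))"
    by (simp add: space_PiM)
  show "emeasure \<mu> (\<Pi>\<^sub>E i\<in>I. space borel) \<noteq> \<infinity>"
    using finite_measure.emeasure_finite[OF finite_\<mu>] by simp
qed

end

section \<open>Characteristic functions of finite-dimensional distributions\<close>

definition fdd_char :: "'b measure \<Rightarrow> (real \<Rightarrow> 'b \<Rightarrow> real) \<Rightarrow> real set \<Rightarrow> (real \<Rightarrow> real) \<Rightarrow> complex" where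
  "fdd_char N Y I u = (CLINT \<omega>|N. iexp (\<Sum>t\<in>I. u t * Y t \<omega>))"

lemma borel_measurable_iexp_lincomb:
  assumes "\<And>t. t \<in> I \<Longrightarrow> Y t \<in> borel_measurable N"
  shows "(\<lambda>\<omega>. iexp (\<Sum>t\<in>I. u t * Y t \<omega>)) \<in> borel_measurable N"
proof -
  have "(\<lambda>x. iexp x) \<in> borel_measurable borel"
    by (intro borel_measurable_continuous_onI continuous_intros)
  moreover have "(\<lambda>\<omega>. \<Sum>t\<in>I. u t * Y t \<omega>) \<in> borel_measurable N"
    using assms by (intro borel_measurable_sum borel_measurable_times borel_measurable_const)
  ultimately show ?thesis
    by (rule measurable_compose[rotated])
qed

lemma integrable_iexp_lincomb:
  assumes "finite_measure N" and "\<And>t. t \<in> I \<Longrightarrow> Y t \<in> borel_measurable N"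
  shows "integrable N (\<lambda>\<omega>. iexp (\<Sum>t\<in>I. u t * Y t \<omega>))"
  using assms borel_measurable_iexp_lincomb
  by (intro finite_measure.integrable_const_bound[where B=1]) auto

lemma fdd_char_eq_distr:
  assumes "finite I" and Y: "\<And>t. t \<in> I \<Longrightarrow> Y t \<in> borel_measurable N"
  shows "fdd_char N Y I u
       = (CLINT y|distr N (PiM I (\<lambda>_. borel)) (\<lambda>\<omega>. \<lambda>t\<in>I. Y t \<omega>). iexp (\<Sum>t\<in>I. u t * y t))"
proof -
  have restrict: "(\<lambda>\<omega>. \<lambda>t\<in>I. Y t \<omega>) \<in> measurable N (PiM I (\<lambda>_. borel))"
    using Y by (intro measurable_restrict) auto
  have "(\<lambda>y. iexp (\<Sum>t\<in>I. u t * y t)) \<in> borel_measurable (PiM I (\<lambda>_. borel))"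
    by (intro borel_measurable_iexp_lincomb measurable_component_singleton)
  then have "(CLINT y|distr N (PiM I (\<lambda>_. borel)) (\<lambda>\<omega>. \<lambda>t\<in>I. Y t \<omega>). iexp (\<Sum>t\<in>I. u t * y t))
      = (CLINT \<omega>|N. iexp (\<Sum>t\<in>I. u t * (\<lambda>t\<in>I. Y t \<omega>) t))"
    by (rule integral_distr[OF restrict])
  also have "\<dots> = fdd_char N Y I u"
    unfolding fdd_char_def by (intro Bochner_Integration.integral_cong refl arg_cong[where f=iexp] sum.cong) auto
  finally show ?thesis
    by (rule sym)
qed

lemma distr_eq_if_fdd_char_eq:
  assumes "prob_space N1" "prob_space N2" and "finite I"
    and Y1: "\<And>t. t \<in> I \<Longrightarrow> Y1 t \<in> borel_measurable N1"
    and Y2: "\<And>t. t \<in> I \<Longrightarrow> Y2 t \<in> borel_measurable N2"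
    and char_eq: "\<And>u. fdd_char N1 Y1 I u = fdd_char N2 Y2 I u"
  shows "distr N1 (PiM I (\<lambda>_. borel)) (\<lambda>\<omega>. \<lambda>t\<in>I. Y1 t \<omega>) = distr N2 (PiM I (\<lambda>_. borel)) (\<lambda>\<omega>. \<lambda>t\<in>I. Y2 t \<omega>)"
proof -
  have "prob_space (distr N1 (PiM I (\<lambda>_. borel)) (\<lambda>\<omega>. \<lambda>t\<in>I. Y1 t \<omega>))"
    "prob_space (distr N2 (PiM I (\<lambda>_. borel)) (\<lambda>\<omega>. \<lambda>t\<in>I. Y2 t \<omega>))"
    using Y1 Y2
    by (auto intro!: prob_space.prob_space_distr[OF assms(1)] prob_space.prob_space_distr[OF assms(2)]
        measurable_restrict)
  then interpret finite_measure_pair_PiM I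
    "distr N1 (PiM I (\<lambda>_. borel)) (\<lambda>\<omega>. \<lambda>t\<in>I. Y1 t \<omega>)"
    "distr N2 (PiM I (\<lambda>_. borel)) (\<lambda>\<omega>. \<lambda>t\<in>I. Y2 t \<omega>)"
    using \<open>finite I\<close> by (intro finite_measure_pair_PiM.intro) (simp_all add: prob_space_def)
  show ?thesis
  proof (rule eq_if_char_eq)
    fix u
    show "(CLINT y|distr N1 (PiM I (\<lambda>_. borel)) (\<lambda>\<omega>. \<lambda>t\<in>I. Y1 t \<omega>). iexp (\<Sum>t\<in>I. u t * y t))
        = (CLINT y|distr N2 (PiM I (\<lambda>_. borel)) (\<lambda>\<omega>. \<lambda>t\<in>I. Y2 t \<omega>). iexp (\<Sum>t\<in>I. u t * y t))"
      using char_eq[of u] fdd_char_eq_distr[where I=I and Y=Y1 and u=u, OF \<open>finite I\<close> Y1]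
        fdd_char_eq_distr[where I=I and Y=Y2 and u=u, OF \<open>finite I\<close> Y2]
      by simp
  qed
qed

theorem fdd_eq_iff_fdd_char_eq:
  assumes "prob_space N1" "prob_space N2"
    and Y1: "\<And>t. t \<ge> 0 \<Longrightarrow> Y1 t \<in> borel_measurable N1"
    and Y2: "\<And>t. t \<ge> 0 \<Longrightarrow> Y2 t \<in> borel_measurable N2"
  shows "fdd_eq N1 Y1 N2 Y2 \<longleftrightarrow>
    (\<forall>I u. finite I \<longrightarrow> I \<subseteq> {0..} \<longrightarrow> fdd_char N1 Y1 I u = fdd_char N2 Y2 I u)"
proof (intro iffI allI impI)
  fix I :: "real set" and u :: "real \<Rightarrow> real"
  assume "fdd_eq N1 Y1 N2 Y2" and I: "finite I" "I \<subseteq> {0..}"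
  then have distr_eq: "distr N1 (PiM I (\<lambda>_. borel)) (\<lambda>\<omega>. \<lambda>t\<in>I. Y1 t \<omega>)
      = distr N2 (PiM I (\<lambda>_. borel)) (\<lambda>\<omega>. \<lambda>t\<in>I. Y2 t \<omega>)"
    unfolding fdd_eq_def by blast
  have "\<And>t. t \<in> I \<Longrightarrow> Y1 t \<in> borel_measurable N1" "\<And>t. t \<in> I \<Longrightarrow> Y2 t \<in> borel_measurable N2"
    using I Y1 Y2 by auto
  then show "fdd_char N1 Y1 I u = fdd_char N2 Y2 I u"
    by (simp only: fdd_char_eq_distr[OF I(1)] distr_eq)
next
  assume char_eq: "\<forall>I u. finite I \<longrightarrow> I \<subseteq> {0..} \<longrightarrow> fdd_char N1 Y1 I u = fdd_char N2 Y2 I u"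
  show "fdd_eq N1 Y1 N2 Y2"
    unfolding fdd_eq_def
  proof (intro allI impI)
    fix I :: "real set" assume I: "finite I \<and> I \<subseteq> {0..}"
    then have "\<And>t. t \<in> I \<Longrightarrow> Y1 t \<in> borel_measurable N1" "\<And>t. t \<in> I \<Longrightarrow> Y2 t \<in> borel_measurable N2"
      using Y1 Y2 by auto
    then show "distr N1 (PiM I (\<lambda>_. borel)) (\<lambda>\<omega>. \<lambda>t\<in>I. Y1 t \<omega>) = distr N2 (PiM I (\<lambda>_. borel)) (\<lambda>\<omega>. \<lambda>t\<in>I. Y2 t \<omega>)"
      using I char_eq by (intro distr_eq_if_fdd_char_eq[OF assms(1,2)]) simp_all
  qed
qed

lemma fdd_char_sum_PiM:
  fixes M :: "'a measure" and K :: "'k set"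
  assumes "prob_space M" "finite K" and X: "\<And>t. t \<in> I \<Longrightarrow> X t \<in> borel_measurable M"
  shows "fdd_char (PiM K (\<lambda>_. M)) (\<lambda>t \<omega>. \<Sum>k\<in>K. X t (\<omega> k)) I u = fdd_char M X I u ^ card K"
proof -
  interpret prob_space M by fact
  interpret product_sigma_finite "\<lambda>_::'k. M" by unfold_locales
  define f where "f x = iexp (\<Sum>t\<in>I. u t * X t x)" for x
  have "integrable M f"
    unfolding f_def using X by (rule integrable_iexp_lincomb[OF finite_measure_axioms])
  have "iexp (\<Sum>t\<in>I. u t * (\<Sum>k\<in>K. X t (\<omega> k))) = (\<Prod>k\<in>K. f (\<omega> k))" for \<omega>
    by (simp add: f_def sum_distrib_left sum.swap[of _ I] exp_sum[symmetric] \<open>finite K\<close>)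
  then have "fdd_char (PiM K (\<lambda>_. M)) (\<lambda>t \<omega>. \<Sum>k\<in>K. X t (\<omega> k)) I u
      = (\<integral>\<omega>. (\<Prod>k\<in>K. f (\<omega> k)) \<partial>PiM K (\<lambda>_. M))"
    by (simp add: fdd_char_def)
  also have "\<dots> = (\<Prod>k\<in>K. integral\<^sup>L M f)"
    using product_integral_prod[OF \<open>finite K\<close>, of "\<lambda>_. f"] \<open>integrable M f\<close> by simp
  finally show ?thesis
    unfolding fdd_char_def f_def by simp
qed

lemma fdd_char_pair:
  fixes M1 :: "'a measure" and M2 :: "'b measure"
  assumes "prob_space M1" "prob_space M2"
    and Y1: "\<And>t. t \<in> I \<Longrightarrow> Y1 t \<in> borel_measurable M1"
    and Y2: "\<And>t. t \<in> I \<Longrightarrow> Y2 t \<in> borel_measurable M2"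
  shows "fdd_char (M1 \<Otimes>\<^sub>M M2) (\<lambda>t \<omega>. Y1 t (fst \<omega>) + Y2 t (snd \<omega>)) I u
       = fdd_char M1 Y1 I u * fdd_char M2 Y2 I u"
proof -
  interpret M1: prob_space M1 by fact
  interpret M2: prob_space M2 by fact
  interpret pair_prob_space M1 M2 by unfold_locales
  define f where "f x = iexp (\<Sum>t\<in>I. u t * Y1 t x)" for x
  define g where "g y = iexp (\<Sum>t\<in>I. u t * Y2 t y)" for y
  have [measurable]: "f \<in> borel_measurable M1" "g \<in> borel_measurable M2"
    unfolding f_def[abs_def] g_def[abs_def] using Y1 Y2 by (simp_all add: borel_measurable_iexp_lincomb)
  have fg_meas: "(\<lambda>\<omega>. f (fst \<omega>) * g (snd \<omega>)) \<in> borel_measurable (M1 \<Otimes>\<^sub>M M2)"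
    by measurable
  have "integrable (M1 \<Otimes>\<^sub>M M2) (\<lambda>\<omega>. f (fst \<omega>) * g (snd \<omega>))"
    by (rule P.integrable_const_bound[where B=1, OF _ fg_meas]) (simp add: f_def g_def norm_mult)
  moreover have factor: "iexp (\<Sum>t\<in>I. u t * (Y1 t x + Y2 t y)) = f x * g y" for x y
    by (simp add: f_def g_def distrib_left sum.distrib exp_add)
  ultimately show ?thesis
    unfolding fdd_char_def factor f_def[symmetric] g_def[symmetric]
    using integral_fst'[of "\<lambda>\<omega>. f (fst \<omega>) * g (snd \<omega>)"] by simp
qed

lemma fdd_char_time_scale:
  assumes "c > 0"
  shows "fdd_char M (\<lambda>t. X (c' * t)) ((\<lambda>t. c * t) ` I) (\<lambda>s. u (s / c))
       = fdd_char M (\<lambda>t. X (c' * c * t)) I u"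
proof -
  have "inj_on (\<lambda>t. c * t) I"
    using assms by (auto simp: inj_on_def)
  then show ?thesis
    using assms by (simp add: fdd_char_def sum.reindex mult.assoc)
qed

section \<open>Continuity in the time scale\<close>

lemma norm_iexp_diff_le: "norm (iexp a - iexp b) \<le> \<bar>a - b\<bar>"
proof -
  have "iexp a - iexp b = iexp b * (iexp (a - b) - 1)"
    by (simp add: right_diff_distrib exp_add[symmetric] algebra_simps)
  then have "norm (iexp a - iexp b) = norm (iexp (a - b) - 1)"
    by (simp add: norm_mult)
  also have "\<dots> \<le> \<bar>a - b\<bar>"
    using iexp_approx1[of "a - b" 0] by simp
  finally show ?thesis .
qed

lemma norm_integral_iexp_diff_le:
  assumes "prob_space M" and Z1: "Z1 \<in> borel_measurable M" and Z2: "Z2 \<in> borel_measurable M"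
    and "\<delta> \<ge> 0"
  shows "norm ((CLINT \<omega>|M. iexp (Z1 \<omega>)) - (CLINT \<omega>|M. iexp (Z2 \<omega>)))
       \<le> \<delta> + 2 * measure M {\<omega>\<in>space M. \<delta> < \<bar>Z1 \<omega> - Z2 \<omega>\<bar>}"
proof -
  interpret prob_space M by fact
  define Bad where "Bad = {\<omega>\<in>space M. \<delta> < \<bar>Z1 \<omega> - Z2 \<omega>\<bar>}"
  have Bad: "Bad \<in> sets M"
    unfolding Bad_def using Z1 Z2 by measurable
  have iexp_integrable: "integrable M (\<lambda>\<omega>. iexp (Z \<omega>))" if "Z \<in> borel_measurable M" for Z
    using integrable_iexp_lincomb[OF finite_measure_axioms, of "{0::nat}" "\<lambda>_. Z" "\<lambda>_. 1"] that by simp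
  have pointwise: "norm (iexp (Z1 \<omega>) - iexp (Z2 \<omega>)) \<le> \<delta> + 2 * indicator Bad \<omega>" if "\<omega> \<in> space M" for \<omega>
  proof (cases "\<omega> \<in> Bad")
    case True
    have "norm (iexp (Z1 \<omega>) - iexp (Z2 \<omega>)) \<le> norm (iexp (Z1 \<omega>)) + norm (iexp (Z2 \<omega>))"
      by (rule norm_triangle_ineq4)
    then show ?thesis
      using True \<open>\<delta> \<ge> 0\<close> by simp
  next
    case False
    then show ?thesis
      using that norm_iexp_diff_le[of "Z1 \<omega>" "Z2 \<omega>"] by (simp add: Bad_def)
  qed
  have "norm ((CLINT \<omega>|M. iexp (Z1 \<omega>)) - (CLINT \<omega>|M. iexp (Z2 \<omega>)))
      = norm (CLINT \<omega>|M. iexp (Z1 \<omega>) - iexp (Z2 \<omega>))"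
    using Z1 Z2 iexp_integrable by simp
  also have "\<dots> \<le> (\<integral>\<omega>. norm (iexp (Z1 \<omega>) - iexp (Z2 \<omega>)) \<partial>M)"
    by (rule integral_norm_bound)
  also have "\<dots> \<le> (\<integral>\<omega>. \<delta> + 2 * indicator Bad \<omega> \<partial>M)"
    using Z1 Z2 Bad iexp_integrable pointwise
    by (intro integral_mono) (auto simp: emeasure_eq_measure)
  also have "\<dots> = \<delta> + 2 * measure M Bad"
    using Bad by (simp add: prob_space emeasure_eq_measure)
  finally show ?thesis
    unfolding Bad_def .
qed

lemma tendsto_integral_iexp_in_measure:
  assumes "prob_space M"
    and Z: "\<forall>\<^sub>F s in F. Z s \<in> borel_measurable M" and Z0: "Z0 \<in> borel_measurable M"
    and conv: "\<And>\<epsilon>. \<epsilon> > 0 \<Longrightarrow> ((\<lambda>s. measure M {\<omega>\<in>space M. \<epsilon> < \<bar>Z s \<omega> - Z0 \<omega>\<bar>}) \<longlongrightarrow> 0) F"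
  shows "((\<lambda>s. CLINT \<omega>|M. iexp (Z s \<omega>)) \<longlongrightarrow> (CLINT \<omega>|M. iexp (Z0 \<omega>))) F"
proof (rule tendstoI)
  fix e :: real assume "e > 0"
  then have "\<forall>\<^sub>F s in F. measure M {\<omega>\<in>space M. e / 2 < \<bar>Z s \<omega> - Z0 \<omega>\<bar>} < e / 4"
    using conv[of "e / 2"] by (auto dest: order_tendstoD(2)[where a="e / 4"])
  with Z show "\<forall>\<^sub>F s in F. dist (CLINT \<omega>|M. iexp (Z s \<omega>)) (CLINT \<omega>|M. iexp (Z0 \<omega>)) < e"
  proof eventually_elim
    case (elim s)
    then show ?case
      using norm_integral_iexp_diff_le[OF \<open>prob_space M\<close> _ Z0, of "Z s" "e / 2"] \<open>e > 0\<close>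
      by (simp add: dist_norm)
  qed
qed

lemma stoch_continuous_time_scale:
  assumes sc: "stoch_continuous M X" and "c \<ge> 0" "t \<ge> 0" "\<epsilon> > 0"
  shows "((\<lambda>c'. measure M {\<omega>\<in>space M. \<epsilon> < \<bar>X (c' * t) \<omega> - X (c * t) \<omega>\<bar>}) \<longlongrightarrow> 0)
           (at c within {0..})"
proof -
  define q where "q s = measure M {\<omega>\<in>space M. \<epsilon> < \<bar>X s \<omega> - X (c * t) \<omega>\<bar>}" for s
  have "(q \<longlongrightarrow> 0) (at (c * t) within {0..})"
    using sc assms unfolding stoch_continuous_def q_def by simp
  moreover have "q (c * t) = 0"
    using \<open>\<epsilon> > 0\<close> by (simp add: q_def)
  ultimately have q_lim: "(q \<longlongrightarrow> 0) (inf (nhds (c * t)) (principal {0..}))"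
    by (simp add: tendsto_at_iff_tendsto_nhds_within)
  have "((\<lambda>c'. c' * t) \<longlongrightarrow> c * t) (at c within {0..})"
    by (intro tendsto_intros)
  moreover have "\<forall>\<^sub>F c' in at c within {0..}. c' * t \<in> {0..}"
    using \<open>t \<ge> 0\<close> unfolding eventually_at_filter by (intro always_eventually) auto
  ultimately have "filterlim (\<lambda>c'. c' * t) (inf (nhds (c * t)) (principal {0..})) (at c within {0..})"
    by (simp add: filterlim_inf filterlim_principal)
  with q_lim show ?thesis
    unfolding q_def[symmetric] by (rule filterlim_compose)
qed

lemma measure_abs_lincomb_gt_le:
  fixes D :: "'i \<Rightarrow> 'a \<Rightarrow> real"
  assumes "finite_measure M" "finite I" and D: "\<And>t. t \<in> I \<Longrightarrow> D t \<in> borel_measurable M"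
    and "\<epsilon> > 0"
  shows "measure M {\<omega>\<in>space M. \<epsilon> < \<bar>\<Sum>t\<in>I. u t * D t \<omega>\<bar>}
       \<le> (\<Sum>t\<in>I. measure M {\<omega>\<in>space M. \<epsilon> / ((\<Sum>t\<in>I. \<bar>u t\<bar>) + 1) < \<bar>D t \<omega>\<bar>})"
proof -
  interpret finite_measure M by fact
  define U where "U = (\<Sum>t\<in>I. \<bar>u t\<bar>) + 1"
  have U_pos: "U > 0"
    unfolding U_def by (simp add: add_nonneg_pos sum_nonneg)
  define Bad where "Bad t = {\<omega>\<in>space M. \<epsilon> / U < \<bar>D t \<omega>\<bar>}" for t
  have Bad_sets: "Bad t \<in> sets M" if "t \<in> I" for t
    unfolding Bad_def using D[OF that] by measurable
  have "{\<omega>\<in>space M. \<epsilon> < \<bar>\<Sum>t\<in>I. u t * D t \<omega>\<bar>} \<subseteq> (\<Union>t\<in>I. Bad t)"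
  proof (rule subsetI, rule ccontr)
    fix \<omega> assume \<omega>: "\<omega> \<in> {\<omega>\<in>space M. \<epsilon> < \<bar>\<Sum>t\<in>I. u t * D t \<omega>\<bar>}" and "\<omega> \<notin> (\<Union>t\<in>I. Bad t)"
    then have small: "\<bar>D t \<omega>\<bar> \<le> \<epsilon> / U" if "t \<in> I" for t
      using that by (auto simp: Bad_def not_less)
    have "\<bar>\<Sum>t\<in>I. u t * D t \<omega>\<bar> \<le> (\<Sum>t\<in>I. \<bar>u t\<bar> * (\<epsilon> / U))"
      by (intro order_trans[OF sum_abs] sum_mono) (metis abs_ge_zero abs_mult mult_left_mono small)
    also have "\<dots> = (U - 1) * (\<epsilon> / U)"
      by (simp only: U_def sum_distrib_right[symmetric]) simp
    also have "\<dots> < U * (\<epsilon> / U)"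
      using \<open>\<epsilon> > 0\<close> U_pos by (intro mult_strict_right_mono) auto
    also have "\<dots> = \<epsilon>"
      using U_pos by simp
    finally show False
      using \<omega> by simp
  qed
  then have "measure M {\<omega>\<in>space M. \<epsilon> < \<bar>\<Sum>t\<in>I. u t * D t \<omega>\<bar>} \<le> measure M (\<Union>t\<in>I. Bad t)"
    using Bad_sets \<open>finite I\<close> by (intro finite_measure_mono) auto
  also have "\<dots> \<le> (\<Sum>t\<in>I. measure M (Bad t))"
    using \<open>finite I\<close> Bad_sets by (rule measure_UNION_le)
  finally show ?thesis
    unfolding Bad_def U_def .
qed

lemma lincomb_time_scale_in_measure:
  fixes M :: "'a measure" and X :: "real \<Rightarrow> 'a \<Rightarrow> real"
  assumes "prob_space M" and meas: "\<And>t. t \<ge> 0 \<Longrightarrow> X t \<in> borel_measurable M"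
    and sc: "stoch_continuous M X" and "finite I" "I \<subseteq> {0..}" and "c \<ge> 0" "\<epsilon> > 0"
  shows "((\<lambda>c'. measure M {\<omega>\<in>space M.
            \<epsilon> < \<bar>(\<Sum>t\<in>I. u t * X (c' * t) \<omega>) - (\<Sum>t\<in>I. u t * X (c * t) \<omega>)\<bar>}) \<longlongrightarrow> 0)
           (at c within {0..})"
proof -
  interpret prob_space M by fact
  define \<delta> where "\<delta> = \<epsilon> / ((\<Sum>t\<in>I. \<bar>u t\<bar>) + 1)"
  have "\<delta> > 0"
    unfolding \<delta>_def using \<open>\<epsilon> > 0\<close> by (simp add: add_nonneg_pos sum_nonneg)
  define q where "q c' t = measure M {\<omega>\<in>space M. \<delta> < \<bar>X (c' * t) \<omega> - X (c * t) \<omega>\<bar>}" for c' t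
  have "\<forall>\<^sub>F c' in at c within {0..}. c' \<ge> 0"
    unfolding eventually_at_filter by (intro always_eventually) auto
  then have upper: "\<forall>\<^sub>F c' in at c within {0..}.
      measure M {\<omega>\<in>space M. \<epsilon> < \<bar>(\<Sum>t\<in>I. u t * X (c' * t) \<omega>) - (\<Sum>t\<in>I. u t * X (c * t) \<omega>)\<bar>}
      \<le> (\<Sum>t\<in>I. q c' t)"
  proof eventually_elim
    case (elim c')
    then show ?case
      using measure_abs_lincomb_gt_le[OF finite_measure_axioms \<open>finite I\<close>,
          of "\<lambda>t \<omega>. X (c' * t) \<omega> - X (c * t) \<omega>" \<epsilon> u] \<open>\<epsilon> > 0\<close> \<open>I \<subseteq> {0..}\<close> \<open>c \<ge> 0\<close> meas
      by (auto simp: q_def \<delta>_def sum_subtractf right_diff_distrib subset_eq)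
  qed
  have "((\<lambda>c'. q c' t) \<longlongrightarrow> 0) (at c within {0..})" if "t \<in> I" for t
    unfolding q_def using that \<open>I \<subseteq> {0..}\<close> \<open>c \<ge> 0\<close> \<open>\<delta> > 0\<close>
    by (intro stoch_continuous_time_scale[OF sc]) auto
  then have sum_lim: "((\<lambda>c'. \<Sum>t\<in>I. q c' t) \<longlongrightarrow> 0) (at c within {0..})"
    by (rule tendsto_null_sum)
  show ?thesis
    by (rule tendsto_sandwich[OF always_eventually upper tendsto_const sum_lim]) simp
qed

theorem continuous_on_fdd_char_time_scale:
  fixes M :: "'a measure" and X :: "real \<Rightarrow> 'a \<Rightarrow> real"
  assumes "prob_space M" and meas: "\<And>t. t \<ge> 0 \<Longrightarrow> X t \<in> borel_measurable M"
    and "stoch_continuous M X" and "finite I" and I: "I \<subseteq> {0..}"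
  shows "continuous_on {0..} (\<lambda>c. fdd_char M (\<lambda>t. X (c * t)) I u)"
  unfolding continuous_on_def fdd_char_def
proof (intro ballI tendsto_integral_iexp_in_measure[OF \<open>prob_space M\<close>])
  have lincomb_meas: "(\<lambda>\<omega>. \<Sum>t\<in>I. u t * X (c * t) \<omega>) \<in> borel_measurable M" if "c \<ge> 0" for c
    using that I meas by (intro borel_measurable_sum borel_measurable_times borel_measurable_const) auto
  fix c :: real assume "c \<in> {0..}"
  then show "(\<lambda>\<omega>. \<Sum>t\<in>I. u t * X (c * t) \<omega>) \<in> borel_measurable M"
    by (simp add: lincomb_meas)
  show "\<forall>\<^sub>F c' in at c within {0..}. (\<lambda>\<omega>. \<Sum>t\<in>I. u t * X (c' * t) \<omega>) \<in> borel_measurable M"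
    unfolding eventually_at_filter by (intro always_eventually) (auto intro: lincomb_meas)
  show "((\<lambda>c'. measure M {\<omega>\<in>space M. \<epsilon> < \<bar>(\<Sum>t\<in>I. u t * X (c' * t) \<omega>) - (\<Sum>t\<in>I. u t * X (c * t) \<omega>)\<bar>})
          \<longlongrightarrow> 0) (at c within {0..})" if "\<epsilon> > 0" for \<epsilon>
    using \<open>c \<in> {0..}\<close> that by (intro lincomb_time_scale_in_measure[OF assms]) auto
qed

section \<open>Continuous solutions of the power law\<close>

lemma nonzero_if_doubling:
  fixes H :: "real \<Rightarrow> 'a::real_normed_field"
  assumes cont: "continuous_on {0..} H" and H0: "H 0 = 1"
    and doubling: "\<And>c. c \<ge> 0 \<Longrightarrow> H (2 * c) = H c ^ 2" and "c \<ge> 0"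
  shows "H c \<noteq> 0"
proof
  assume "H c = 0"
  have zero: "H (c / 2 ^ k) = 0" for k :: nat
  proof (induction k)
    case (Suc k)
    then show ?case
      using doubling[of "c / 2 ^ Suc k"] \<open>c \<ge> 0\<close> by simp
  qed (simp add: \<open>H c = 0\<close>)
  have "(\<lambda>k. c / 2 ^ k) \<longlonglongrightarrow> 0"
    by (intro LIMSEQ_divide_realpow_zero) auto
  then have "(\<lambda>k. H (c / 2 ^ k)) \<longlonglongrightarrow> H 0"
    using \<open>c \<ge> 0\<close> by (intro continuous_on_tendsto_compose[OF cont]) auto
  then have "(\<lambda>k. 0 :: 'a) \<longlonglongrightarrow> 1"
    using zero H0 by simp
  then show False
    by (simp add: LIMSEQ_const_iff)
qed

lemma continuous_on_constant_if_exp_eq_1: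
  fixes D :: "real \<Rightarrow> complex"
  assumes "continuous_on S D" "connected S" and exp_D: "\<And>x. x \<in> S \<Longrightarrow> exp (D x) = 1"
    and "x \<in> S" "y \<in> S"
  shows "D x = D y"
proof -
  have "D constant_on S"
  proof (rule continuous_discrete_range_constant_eq[THEN iffD1, rule_format, OF \<open>connected S\<close>],
      intro conjI ballI exI[of _ "2 * pi"] allI impI)
    fix x y assume "x \<in> S" "y \<in> S \<and> D y \<noteq> D x"
    obtain k :: int where k: "Re (D x) = 0" "Im (D x) = of_int (2 * k) * pi"
      using exp_D[OF \<open>x \<in> S\<close>] by (auto simp: exp_eq_1)
    obtain m :: int where m: "Re (D y) = 0" "Im (D y) = of_int (2 * m) * pi"
      using exp_D \<open>y \<in> S \<and> D y \<noteq> D x\<close> by (auto simp: exp_eq_1)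
    have "k \<noteq> m"
      using k m \<open>y \<in> S \<and> D y \<noteq> D x\<close>
      by (auto simp: complex_eq_iff)
    then have "2 * pi * 1 \<le> 2 * pi * \<bar>real_of_int m - real_of_int k\<bar>"
      by (intro mult_left_mono) auto
    also have "\<dots> = \<bar>Im (D y - D x)\<bar>"
    proof -
      have "Im (D y - D x) = 2 * pi * (real_of_int m - real_of_int k)"
        using k m by (simp add: algebra_simps)
      then show ?thesis
        by (simp add: abs_mult)
    qed
    also have "\<dots> \<le> norm (D y - D x)"
      by (rule abs_Im_le_cmod)
    finally show "2 * pi \<le> norm (D y - D x)"
      by simp
  qed (use assms in simp_all)
  then show ?thesis
    using \<open>x \<in> S\<close> \<open>y \<in> S\<close> unfolding constant_on_def by auto
qed

lemma continuous_homogeneous_imp_linear: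
  fixes L :: "real \<Rightarrow> 'a::real_normed_vector"
  assumes cont: "continuous_on {0..} L"
    and homogeneous: "\<And>n x. x \<ge> 0 \<Longrightarrow> L (real n * x) = real n *\<^sub>R L x" and "x \<ge> 0"
  shows "L x = x *\<^sub>R L 1"
proof -
  have rational: "L (real m / real k) = (real m / real k) *\<^sub>R L 1" if "k > 0" for m k :: nat
  proof -
    have "real k *\<^sub>R L (real m / real k) = L (real m * 1)"
      using homogeneous[of "real m / real k" k] that by simp
    also have "\<dots> = real m *\<^sub>R L 1"
      using homogeneous[of 1 m] by simp
    finally have eq: "real k *\<^sub>R L (real m / real k) = real m *\<^sub>R L 1" .
    have "L (real m / real k) = inverse (real k) *\<^sub>R (real k *\<^sub>R L (real m / real k))"
      using that by simp
    also have "\<dots> = (real m / real k) *\<^sub>R L 1"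
      unfolding eq scaleR_scaleR by (simp add: divide_inverse_commute)
    finally show ?thesis .
  qed
  define r where "r k = real (nat \<lfloor>real (Suc k) * x\<rfloor>) / real (Suc k)" for k
  have r_bounds: "x - 1 / real (Suc k) \<le> r k" "r k \<le> x" for k
  proof -
    have r_eq: "r k = of_int \<lfloor>real (Suc k) * x\<rfloor> / real (Suc k)"
      using \<open>x \<ge> 0\<close> by (simp add: r_def)
    have "x - 1 / real (Suc k) = (real (Suc k) * x - 1) / real (Suc k)"
      by (simp add: field_simps)
    also have "\<dots> \<le> r k"
      unfolding r_eq using real_of_int_floor_gt_diff_one[of "real (Suc k) * x"]
      by (intro divide_right_mono) simp_all
    finally show "x - 1 / real (Suc k) \<le> r k" .
    have "r k \<le> (real (Suc k) * x) / real (Suc k)"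
      unfolding r_eq by (intro divide_right_mono of_int_floor_le) simp
    then show "r k \<le> x"
      by simp
  qed
  have "(\<lambda>k. x - 1 / real (Suc k)) \<longlonglongrightarrow> x - 0"
    by (intro tendsto_diff tendsto_const LIMSEQ_inverse_real_of_nat[unfolded inverse_eq_divide])
  then have r_lim: "r \<longlonglongrightarrow> x"
    using r_bounds by (intro tendsto_sandwich[of "\<lambda>k. x - 1 / real (Suc k)" r sequentially "\<lambda>_. x"]) auto
  have "L (r k) = r k *\<^sub>R L 1" for k
    unfolding r_def by (rule rational) simp
  then have "(\<lambda>k. L (r k)) \<longlonglongrightarrow> x *\<^sub>R L 1"
    by (simp add: tendsto_scaleR[OF r_lim tendsto_const])
  moreover have "(\<lambda>k. L (r k)) \<longlonglongrightarrow> L x"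
    using \<open>x \<ge> 0\<close> by (intro continuous_on_tendsto_compose[OF cont r_lim]) (auto simp: r_def)
  ultimately show ?thesis
    using LIMSEQ_unique by metis
qed

lemma continuous_log_on_nonneg:
  fixes H :: "real \<Rightarrow> complex"
  assumes cont: "continuous_on {0..} H" and H0: "H 0 = 1" and nonzero: "\<And>x. x \<ge> 0 \<Longrightarrow> H x \<noteq> 0"
  obtains L where "continuous_on {0..} L" "L 0 = 0" "\<And>x. x \<ge> 0 \<Longrightarrow> H x = exp (L x)"
proof -
  obtain L0 where L0_cont: "continuous_on {0..} L0" and L0: "\<And>x. x \<in> {0..} \<Longrightarrow> H x = exp (L0 x)"
    using continuous_logarithm_on_contractible[OF cont convex_imp_contractible[OF convex_real_interval(1)]]
      nonzero by auto
  show ?thesis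
  proof
    show "continuous_on {0..} (\<lambda>x. L0 x - L0 0)"
      by (intro continuous_intros L0_cont)
    show "H x = exp (L0 x - L0 0)" if "x \<ge> 0" for x
      using L0[of x] L0[of 0] H0 that by (simp add: exp_diff)
  qed simp
qed

lemma log_homogeneous_if_power_law:
  fixes L :: "real \<Rightarrow> complex"
  assumes L_cont: "continuous_on {0..} L" and "L 0 = 0"
    and power: "\<And>y. y \<ge> 0 \<Longrightarrow> exp (L (real n * y)) = exp (L y) ^ n" and "x \<ge> 0"
  shows "L (real n * x) = real n *\<^sub>R L x"
proof -
  define D where "D y = L (real n * y) - of_nat n * L y" for y
  have "continuous_on {0..} D"
    unfolding D_def[abs_def] by (intro continuous_intros continuous_on_compose2[OF L_cont] L_cont) auto
  moreover have "exp (D y) = 1" if "y \<in> {0..}" for y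
    using that power[of y] by (simp add: D_def exp_diff exp_of_nat_mult)
  ultimately have "D x = D 0"
    using \<open>x \<ge> 0\<close> by (intro continuous_on_constant_if_exp_eq_1[of "{0..}"]) (auto simp: is_interval_connected)
  then show ?thesis
    using \<open>L 0 = 0\<close> by (simp add: D_def scaleR_conv_of_real)
qed

theorem multiplicative_if_power_law:
  fixes H :: "real \<Rightarrow> complex"
  assumes cont: "continuous_on {0..} H" and H0: "H 0 = 1"
    and power: "\<And>c n. c > 0 \<Longrightarrow> n \<ge> 2 \<Longrightarrow> H (real n * c) = H c ^ n"
    and "a \<ge> 0" "b \<ge> 0"
  shows "H (a + b) = H a * H b"
proof -
  have power_all: "H (real n * c) = H c ^ n" if "c \<ge> 0" for c n
  proof (cases "n \<ge> 2 \<and> c > 0")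
    case False
    then have "n = 0 \<or> n = 1 \<or> c = 0"
      using that by auto
    then show ?thesis
      using H0 by auto
  qed (use power in simp)
  have "H x \<noteq> 0" if "x \<ge> 0" for x
    using nonzero_if_doubling[OF cont H0] power_all[of _ 2] that by simp
  then obtain L where L_cont: "continuous_on {0..} L" and "L 0 = 0"
    and H_exp_L: "\<And>x. x \<ge> 0 \<Longrightarrow> H x = exp (L x)"
    using continuous_log_on_nonneg[OF cont H0] by blast
  have "L (real n * x) = real n *\<^sub>R L x" if "x \<ge> 0" for n x
    using L_cont \<open>L 0 = 0\<close> H_exp_L power_all that
    by (intro log_homogeneous_if_power_law) simp_all
  then have "L x = x *\<^sub>R L 1" if "x \<ge> 0" for x
    using continuous_homogeneous_imp_linear[OF L_cont _ that] by blast
  then have "L (a + b) = L a + L b"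
    using \<open>a \<ge> 0\<close> \<open>b \<ge> 0\<close> by (metis scaleR_add_left add_nonneg_nonneg)
  then show ?thesis
    using \<open>a \<ge> 0\<close> \<open>b \<ge> 0\<close> H_exp_L by (simp add: exp_add)
qed

lemma power_law_if_multiplicative:
  fixes H :: "real \<Rightarrow> 'a::monoid_mult"
  assumes mult: "\<And>a b. a > 0 \<Longrightarrow> b > 0 \<Longrightarrow> H (a + b) = H a * H b" and "c > 0"
  shows "H (real (Suc n) * c) = H c ^ Suc n"
proof (induction n)
  case (Suc n)
  have "H (real (Suc (Suc n)) * c) = H (real (Suc n) * c + c)"
    by (simp add: algebra_simps)
  also have "\<dots> = H (real (Suc n) * c) * H c"
    using mult[of "real (Suc n) * c" c] \<open>c > 0\<close> by simp
  also have "\<dots> = H c ^ Suc (Suc n)"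
    unfolding Suc by (rule power_Suc2[symmetric])
  finally show ?case .
qed simp

section \<open>Time-stability\<close>

lemma char_eq_1_if_idempotent:
  assumes D: "real_distribution D" and idem: "\<And>s. char D s ^ 2 = char D s"
  shows "char D s = 1"
proof (rule ccontr)
  have zero_or_one: "char D x = 0 \<or> char D x = 1" for x
    using idem[of x] by (auto simp: power2_eq_square algebra_simps)
  have cont: "continuous_on S (\<lambda>x. Re (char D x))" for S
    using real_distribution.isCont_char[OF D]
    by (intro continuous_at_imp_continuous_on ballI continuous_intros)
  assume "char D s \<noteq> 1"
  then have "Re (char D s) = 0"
    using zero_or_one[of s] by auto
  moreover have "Re (char D 0) = 1"
    using real_distribution.char_zero[OF D] by simp
  ultimately obtain x where "Re (char D x) = 1 / 2"
    using IVT2'[of "\<lambda>x. Re (char D x)" s "1/2" 0, OF _ _ _ cont]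
      IVT'[of "\<lambda>x. Re (char D x)" s "1/2" 0, OF _ _ _ cont]
    by (cases "s \<le> 0") force+
  then show False
    using zero_or_one[of x] by auto
qed

lemma fdd_char_time_zero:
  "fdd_char M (\<lambda>t. X (0 * t)) I u = fdd_char M X {0} (\<lambda>_. \<Sum>t\<in>I. u t)"
  by (simp add: fdd_char_def sum_distrib_right)

lemma time_stable_iff_fdd_char_power:
  fixes M :: "'a measure" and X :: "real \<Rightarrow> 'a \<Rightarrow> real"
  assumes "prob_space M" and meas: "\<And>t. t \<ge> 0 \<Longrightarrow> X t \<in> borel_measurable M"
  shows "time_stable M X \<longleftrightarrow> (\<forall>I u. finite I \<longrightarrow> I \<subseteq> {0..} \<longrightarrow>
    (\<forall>n\<ge>2. fdd_char M (\<lambda>t. X (real n * t)) I u = fdd_char M X I u ^ n))"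
proof -
  have "fdd_eq (PiM {..<n} (\<lambda>_. M)) (\<lambda>t \<omega>. \<Sum>i<n. X t (\<omega> i)) M (\<lambda>t \<omega>. X (real n * t) \<omega>)
      \<longleftrightarrow> (\<forall>I u. finite I \<longrightarrow> I \<subseteq> {0..} \<longrightarrow> fdd_char M (\<lambda>t. X (real n * t)) I u = fdd_char M X I u ^ n)"
    for n
  proof -
    have sum_meas: "(\<lambda>\<omega>. \<Sum>i<n. X t (\<omega> i)) \<in> borel_measurable (PiM {..<n} (\<lambda>_. M))" if "t \<ge> 0" for t
      using meas[OF that] by measurable
    have sum_char: "fdd_char (PiM {..<n} (\<lambda>_. M)) (\<lambda>t \<omega>. \<Sum>i<n. X t (\<omega> i)) I u = fdd_char M X I u ^ n"
      if "I \<subseteq> {0..}" for I u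
      using fdd_char_sum_PiM[OF \<open>prob_space M\<close> finite_lessThan, where I=I and X=X and u=u] that meas by auto
    have "fdd_eq (PiM {..<n} (\<lambda>_. M)) (\<lambda>t \<omega>. \<Sum>i<n. X t (\<omega> i)) M (\<lambda>t \<omega>. X (real n * t) \<omega>)
      \<longleftrightarrow> (\<forall>I u. finite I \<longrightarrow> I \<subseteq> {0..} \<longrightarrow> fdd_char (PiM {..<n} (\<lambda>_. M)) (\<lambda>t \<omega>. \<Sum>i<n. X t (\<omega> i)) I u
          = fdd_char M (\<lambda>t. X (real n * t)) I u)"
      using \<open>prob_space M\<close> sum_meas meas
      by (intro fdd_eq_iff_fdd_char_eq prob_space_PiM) simp_all
    also have "\<dots> \<longleftrightarrow> (\<forall>I u. finite I \<longrightarrow> I \<subseteq> {0..} \<longrightarrow>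
        fdd_char M (\<lambda>t. X (real n * t)) I u = fdd_char M X I u ^ n)"
      using sum_char by (intro iff_allI imp_cong refl) auto
    finally show ?thesis .
  qed
  then show ?thesis
    unfolding time_stable_def by auto
qed

lemma fdd_char_power_time_scale:
  assumes power: "\<And>I u. finite I \<Longrightarrow> I \<subseteq> {0..} \<Longrightarrow>
      fdd_char M (\<lambda>t. X (real n * t)) I u = fdd_char M X I u ^ n"
    and "finite I" "I \<subseteq> {0..}" "c > 0"
  shows "fdd_char M (\<lambda>t. X (real n * c * t)) I u = fdd_char M (\<lambda>t. X (c * t)) I u ^ n"
proof -
  have "finite ((\<lambda>t. c * t) ` I)" "(\<lambda>t. c * t) ` I \<subseteq> {0..}"
    using assms by auto
  then show ?thesis
    using power fdd_char_time_scale[OF \<open>c > 0\<close>, of M X "real n" I u]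
      fdd_char_time_scale[OF \<open>c > 0\<close>, of M X 1 I u]
    by simp
qed

lemma two_copies_iff_fdd_char_mult:
  fixes M :: "'a measure" and X :: "real \<Rightarrow> 'a \<Rightarrow> real"
  assumes "prob_space M" and meas: "\<And>t. t \<ge> 0 \<Longrightarrow> X t \<in> borel_measurable M"
  shows "(\<forall>a>0. \<forall>b>0. fdd_eq (M \<Otimes>\<^sub>M M) (\<lambda>t \<omega>. X (a * t) (fst \<omega>) + X (b * t) (snd \<omega>))
                          M (\<lambda>t \<omega>. X ((a + b) * t) \<omega>))
    \<longleftrightarrow> (\<forall>I u. finite I \<longrightarrow> I \<subseteq> {0..} \<longrightarrow> (\<forall>a>0. \<forall>b>0.
          fdd_char M (\<lambda>t. X ((a + b) * t)) I u
          = fdd_char M (\<lambda>t. X (a * t)) I u * fdd_char M (\<lambda>t. X (b * t)) I u))"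
proof -
  interpret prob_space M by fact
  interpret pair_prob_space M M by unfold_locales
  have "fdd_eq (M \<Otimes>\<^sub>M M) (\<lambda>t \<omega>. X (a * t) (fst \<omega>) + X (b * t) (snd \<omega>)) M (\<lambda>t \<omega>. X ((a + b) * t) \<omega>)
      \<longleftrightarrow> (\<forall>I u. finite I \<longrightarrow> I \<subseteq> {0..} \<longrightarrow> fdd_char M (\<lambda>t. X ((a + b) * t)) I u
          = fdd_char M (\<lambda>t. X (a * t)) I u * fdd_char M (\<lambda>t. X (b * t)) I u)"
    if "a > 0" "b > 0" for a b
  proof -
    have pair_meas: "(\<lambda>\<omega>. X (a * t) (fst \<omega>) + X (b * t) (snd \<omega>)) \<in> borel_measurable (M \<Otimes>\<^sub>M M)"
      if "t \<ge> 0" for t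
    proof -
      have [measurable]: "X (a * t) \<in> borel_measurable M" "X (b * t) \<in> borel_measurable M"
        using meas that \<open>a > 0\<close> \<open>b > 0\<close> by simp_all
      show ?thesis
        by measurable
    qed
    have pair_char: "fdd_char (M \<Otimes>\<^sub>M M) (\<lambda>t \<omega>. X (a * t) (fst \<omega>) + X (b * t) (snd \<omega>)) I u
        = fdd_char M (\<lambda>t. X (a * t)) I u * fdd_char M (\<lambda>t. X (b * t)) I u" if "I \<subseteq> {0..}" for I u
      using that \<open>a > 0\<close> \<open>b > 0\<close> meas by (intro fdd_char_pair[OF \<open>prob_space M\<close> \<open>prob_space M\<close>]) auto
    have "fdd_eq (M \<Otimes>\<^sub>M M) (\<lambda>t \<omega>. X (a * t) (fst \<omega>) + X (b * t) (snd \<omega>)) M (\<lambda>t \<omega>. X ((a + b) * t) \<omega>)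
      \<longleftrightarrow> (\<forall>I u. finite I \<longrightarrow> I \<subseteq> {0..} \<longrightarrow>
          fdd_char (M \<Otimes>\<^sub>M M) (\<lambda>t \<omega>. X (a * t) (fst \<omega>) + X (b * t) (snd \<omega>)) I u
          = fdd_char M (\<lambda>t. X ((a + b) * t)) I u)"
      using P.prob_space_axioms \<open>prob_space M\<close> \<open>a > 0\<close> \<open>b > 0\<close> meas
      by (intro fdd_eq_iff_fdd_char_eq) (simp_all add: pair_meas)
    also have "\<dots> \<longleftrightarrow> (\<forall>I u. finite I \<longrightarrow> I \<subseteq> {0..} \<longrightarrow> fdd_char M (\<lambda>t. X ((a + b) * t)) I u
          = fdd_char M (\<lambda>t. X (a * t)) I u * fdd_char M (\<lambda>t. X (b * t)) I u)"
      using pair_char by (intro iff_allI imp_cong refl) auto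
    finally show ?thesis .
  qed
  then show ?thesis
    by auto
qed

lemma fdd_char_time_zero_eq_1:
  fixes M :: "'a measure" and X :: "real \<Rightarrow> 'a \<Rightarrow> real"
  assumes "prob_space M" and X0: "X 0 \<in> borel_measurable M"
    and doubling: "\<And>I u. finite I \<Longrightarrow> I \<subseteq> {0..} \<Longrightarrow>
      fdd_char M (\<lambda>t. X (2 * t)) I u = fdd_char M X I u ^ 2"
  shows "fdd_char M (\<lambda>t. X (0 * t)) I u = 1"
proof -
  interpret prob_space M by fact
  define D where "D = distr M borel (X 0)"
  have D: "real_distribution D"
    using prob_space_distr[OF X0] by (simp add: real_distribution_def real_distribution_axioms_def D_def)
  have char_D: "fdd_char M X {0} (\<lambda>_. s) = char D s" for s
  proof -
    have "(\<lambda>x. iexp (s * x)) \<in> borel_measurable borel"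
      by (intro borel_measurable_continuous_onI continuous_intros)
    then show ?thesis
      unfolding fdd_char_def char_def D_def using X0 by (simp add: integral_distr)
  qed
  have "char D s ^ 2 = char D s" for s
    using doubling[of "{0}" "\<lambda>_. s"] by (simp add: char_D[symmetric] fdd_char_def)
  then show ?thesis
    unfolding fdd_char_time_zero char_D by (rule char_eq_1_if_idempotent[OF D])
qed

lemma fdd_char_power_law_iff_multiplicative:
  fixes M :: "'a measure" and X :: "real \<Rightarrow> 'a \<Rightarrow> real"
  assumes "prob_space M"
    and "\<And>t. t \<ge> 0 \<Longrightarrow> X t \<in> borel_measurable M"
    and "stoch_continuous M X"
  shows "(\<forall>I u. finite I \<longrightarrow> I \<subseteq> {0..} \<longrightarrow>
      (\<forall>n\<ge>2. fdd_char M (\<lambda>t. X (real n * t)) I u = fdd_char M X I u ^ n))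
    \<longleftrightarrow> (\<forall>I u. finite I \<longrightarrow> I \<subseteq> {0..} \<longrightarrow> (\<forall>a>0. \<forall>b>0.
      fdd_char M (\<lambda>t. X ((a + b) * t)) I u
      = fdd_char M (\<lambda>t. X (a * t)) I u * fdd_char M (\<lambda>t. X (b * t)) I u))"
proof (intro iffI allI impI)
  fix I :: "real set" and u :: "real \<Rightarrow> real" and a b :: real
  assume power: "\<forall>I u. finite I \<longrightarrow> I \<subseteq> {0..} \<longrightarrow>
      (\<forall>n\<ge>2. fdd_char M (\<lambda>t. X (real n * t)) I u = fdd_char M X I u ^ n)"
    and I: "finite I" "I \<subseteq> {0..}" and "a > 0" "b > 0"
  show "fdd_char M (\<lambda>t. X ((a + b) * t)) I u
      = fdd_char M (\<lambda>t. X (a * t)) I u * fdd_char M (\<lambda>t. X (b * t)) I u"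
  proof (rule multiplicative_if_power_law[where H = "\<lambda>c. fdd_char M (\<lambda>t. X (c * t)) I u"])
    show "continuous_on {0..} (\<lambda>c. fdd_char M (\<lambda>t. X (c * t)) I u)"
      by (rule continuous_on_fdd_char_time_scale[OF assms I])
    show "fdd_char M (\<lambda>t. X (0 * t)) I u = 1"
    proof (rule fdd_char_time_zero_eq_1[where X=X, OF assms(1) assms(2)[OF order_refl]])
      fix J :: "real set" and v :: "real \<Rightarrow> real"
      assume "finite J" "J \<subseteq> {0..}"
      then show "fdd_char M (\<lambda>t. X (2 * t)) J v = fdd_char M X J v ^ 2"
        using power[rule_format, where I=J and u=v and n=2] by simp
    qed
    show "fdd_char M (\<lambda>t. X (real n * c * t)) I u = fdd_char M (\<lambda>t. X (c * t)) I u ^ n"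
      if "c > 0" "n \<ge> 2" for c n
      using power I that by (intro fdd_char_power_time_scale) auto
  qed (use \<open>a > 0\<close> \<open>b > 0\<close> in auto)
next
  fix I :: "real set" and u :: "real \<Rightarrow> real" and n :: nat
  assume mult: "\<forall>I u. finite I \<longrightarrow> I \<subseteq> {0..} \<longrightarrow> (\<forall>a>0. \<forall>b>0.
      fdd_char M (\<lambda>t. X ((a + b) * t)) I u = fdd_char M (\<lambda>t. X (a * t)) I u * fdd_char M (\<lambda>t. X (b * t)) I u)"
    and I: "finite I" "I \<subseteq> {0..}" and "n \<ge> 2"
  show "fdd_char M (\<lambda>t. X (real n * t)) I u = fdd_char M X I u ^ n"
    using power_law_if_multiplicative[where H = "\<lambda>c. fdd_char M (\<lambda>t. X (c * t)) I u" and c = 1 and n = "n - 1"]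
      mult I \<open>n \<ge> 2\<close>
    by simp
qed

theorem proposition2p1:
  fixes M :: "'a measure" and X :: "real \<Rightarrow> 'a \<Rightarrow> real"
  assumes "prob_space M"
    and "\<And>t. t \<ge> 0 \<Longrightarrow> X t \<in> borel_measurable M"
    and "stoch_continuous M X"
  shows "time_stable M X \<longleftrightarrow>
    (\<forall>a>0. \<forall>b>0. fdd_eq (M \<Otimes>\<^sub>M M) (\<lambda>t \<omega>. X (a * t) (fst \<omega>) + X (b * t) (snd \<omega>))
                          M (\<lambda>t \<omega>. X ((a + b) * t) \<omega>))"
proof -
  note time_stable_iff_fdd_char_power[OF assms(1,2)]
  also note fdd_char_power_law_iff_multiplicative[OF assms]
  also note two_copies_iff_fdd_char_mult[OF assms(1,2), symmetric]
  finally show ?thesis .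
qed

end
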